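(* Let $\mathbf A\in\mathbb R^{m\times n}$ with $0<m<n$ and suppose there is $\Delta>0$ such that $\|\mathbf h\|_1\ge\sqrt{m/\Delta}\,\|\mathbf h\|_2$ for all nonzero $\mathbf h\in\mathrm{Null}(\mathbf A)$. Let $\mathbf x^0\in\mathbb R^n$ be arbitrary, $\mathcal S$ the set of indices of its $k$ largest components in magnitude, $\mathcal Z=\{1,\dots,n\}\setminus\mathcal S$, and let $\alpha>\|\mathbf x^0_{\mathcal Z}\|_\infty$. Define $C_3:=\frac{\alpha+\|\mathbf x^0_{\mathcal S}\|_\infty}{\alpha-\|\mathbf x^0_{\mathcal Z}\|_\infty}$ and $C_4:=\frac{2\alpha}{\alpha-\|\mathbf x^0_{\mathcal Z}\|_\infty}$. If $m\ge 4(1+C_3)^2k\Delta$, then the solution $\mathbf x^*$ of problem (P2) with $\mathbf b=\mathbf A\mathbf x^0$ satisfies $$\|\mathbf x^*-\mathbf x^0\|_1\le 4C_4\|\mathbf x^0_{\mathcal Z}\|_1.$$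
   Context: Problem (P2) is $\min_{\mathbf x}\{\|\mathbf x\|_1+\frac{1}{2\alpha}\|\mathbf x\|_2^2:\ \mathbf A\mathbf x=\mathbf b\}$. $\mathbf x_{\mathcal S}$ is the restriction of $\mathbf x$ to coordinates in $\mathcal S$. *)

theory Defs
  imports "HOL-Analysis.Analysis"
begin

definition l1norm :: "real ^ 'n \<Rightarrow> real" where
  "l1norm x = (\<Sum>i\<in>UNIV. \<bar>x $ i\<bar>)"

definition l1norm_on :: "'n set \<Rightarrow> real ^ 'n \<Rightarrow> real" where
  "l1norm_on S x = (\<Sum>i\<in>S. \<bar>x $ i\<bar>)"

definition linf_on :: "'n set \<Rightarrow> real ^ 'n \<Rightarrow> real" where
  "linf_on S x = (if S = {} then 0 else Max ((\<lambda>i. \<bar>x $ i\<bar>) ` S))"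

definition P2_obj :: "real \<Rightarrow> real ^ 'n \<Rightarrow> real" where
  "P2_obj \<alpha> x = l1norm x + (1 / (2 * \<alpha>)) * (norm x)\<^sup>2"

definition P2_solution :: "real ^ 'n ^ 'm \<Rightarrow> real ^ 'm \<Rightarrow> real \<Rightarrow> real ^ 'n \<Rightarrow> bool" where
  "P2_solution A b \<alpha> x \<longleftrightarrow> A *v x = b \<and> (\<forall>y. A *v y = b \<longrightarrow> P2_obj \<alpha> x \<le> P2_obj \<alpha> y)"

end

theory Submission
  imports Defs
begin

text \<open>
  Put h = xs - x0, split the coordinates into S and its complement Z.
  (1) Optimality of xs for (P2) compared with the feasible point x0 gives, coordinate by
      coordinate, a "cone condition"
        (\<alpha> - |x0_Z|_inf) |h_Z|_1 \<le> (\<alpha> + |x0_S|_inf) |h_S|_1 + 2 \<alpha> |x0_Z|_1,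
      i.e. |h_Z|_1 \<le> C3 |h_S|_1 + C4 |x0_Z|_1.
  (2) h lies in the null space of A, so by the null-space property and Cauchy-Schwarz
      (|h_S|_1 \<le> sqrt k |h|_2) the hypothesis on m gives 2 (1 + C3) |h_S|_1 \<le> |h|_1.
  Combining (1) and (2) yields |h|_1 \<le> 2 C4 |x0_Z|_1, which is even stronger than the
  claimed bound 4 C4 |x0_Z|_1.
\<close>

lemma linf_on_ge: "finite S \<Longrightarrow> i \<in> S \<Longrightarrow> \<bar>x $ i\<bar> \<le> linf_on S x"
  unfolding linf_on_def by auto

lemma linf_on_nonneg: "finite S \<Longrightarrow> linf_on S x \<ge> 0"
  unfolding linf_on_def
  by (cases "S = {}") (auto intro: order.trans[OF abs_ge_zero Max_ge])

lemma l1norm_on_nonneg: "l1norm_on S x \<ge> 0"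
  unfolding l1norm_on_def by (simp add: sum_nonneg)

lemma l1norm_split: "l1norm (x :: real ^ 'n) = l1norm_on S x + l1norm_on (- S) x"
  unfolding l1norm_def l1norm_on_def
  using sum.union_disjoint[of S "- S" "\<lambda>i. \<bar>x $ i\<bar>"] by (simp add: Compl_partition)

lemma norm_sq_vec: "(norm (x :: real ^ 'n))\<^sup>2 = (\<Sum>i\<in>UNIV. (x $ i)\<^sup>2)"
  unfolding power2_norm_eq_inner inner_vec_def by (simp add: power2_eq_square)

lemma l1norm_on_le_sqrt_card: "l1norm_on S (x :: real ^ 'n) \<le> sqrt (card S) * norm x"
proof -
  have "(l1norm_on S x)\<^sup>2 \<le> (\<Sum>i\<in>S. \<bar>x $ i\<bar>\<^sup>2) * card S"
    unfolding l1norm_on_def by (rule sum_squared_le_sum_of_squares)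
  also have "\<dots> \<le> (norm x)\<^sup>2 * card S"
    unfolding norm_sq_vec power2_abs by (intro mult_right_mono sum_mono2) auto
  finally have "sqrt ((l1norm_on S x)\<^sup>2) \<le> sqrt ((norm x)\<^sup>2 * card S)"
    by (rule real_sqrt_le_mono)
  thus ?thesis using l1norm_on_nonneg[of S x] by (simp add: real_sqrt_mult mult.commute)
qed

lemma coord_obj_gain:
  fixes a c u v :: real
  assumes a: "a > 0" and u: "\<bar>u\<bar> \<le> c"
  shows "\<bar>v\<bar> + v\<^sup>2 / (2*a) - \<bar>u\<bar> - u\<^sup>2 / (2*a) \<ge> \<bar>v\<bar> - \<bar>u\<bar> - (c / a) * \<bar>v - u\<bar>"
proof -
  have "\<bar>u * (v - u)\<bar> \<le> c * \<bar>v - u\<bar>" using u by (simp add: abs_mult mult_right_mono)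
  hence "2 * u * (v - u) \<ge> - 2 * c * \<bar>v - u\<bar>" by linarith
  moreover have "v\<^sup>2 - u\<^sup>2 = 2 * u * (v - u) + (v - u)\<^sup>2"
    by (simp add: power2_eq_square algebra_simps)
  ultimately have "v\<^sup>2 - u\<^sup>2 \<ge> - 2 * c * \<bar>v - u\<bar>"
    by (smt (verit) zero_le_power2)
  hence "(v\<^sup>2 - u\<^sup>2) / (2*a) \<ge> - (c / a) * \<bar>v - u\<bar>" using a by (simp add: field_simps)
  thus ?thesis by (simp add: diff_divide_distrib)
qed

text \<open>Optimality of xs against the feasible point x0, summed over S and over -S
  (where |v| - |u| \<ge> -|v-u| resp. \<ge> |v-u| - 2|u|), gives the cone condition.\<close>
lemma P2_solution_cone:
  fixes A :: "real ^ 'n ^ 'm" and x0 xs :: "real ^ 'n"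
  assumes sol: "P2_solution A (A *v x0) \<alpha> xs"
    and alpha: "\<alpha> > linf_on (- S) x0"
  shows "(\<alpha> - linf_on (- S) x0) * l1norm_on (- S) (xs - x0)
         \<le> (\<alpha> + linf_on S x0) * l1norm_on S (xs - x0) + 2 * \<alpha> * l1norm_on (- S) x0"
proof -
  define aS where "aS = linf_on S x0"
  define aZ where "aZ = linf_on (- S) x0"
  define g where "g i = \<bar>xs$i\<bar> + (xs$i)\<^sup>2/(2*\<alpha>) - \<bar>x0$i\<bar> - (x0$i)\<^sup>2/(2*\<alpha>)" for i
  have a0: "\<alpha> > 0" using alpha linf_on_nonneg[of "- S" x0] by simp
  have "P2_obj \<alpha> xs \<le> P2_obj \<alpha> x0" using sol unfolding P2_solution_def by simp
  hence "(\<Sum>i\<in>UNIV. g i) \<le> 0"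
    unfolding P2_obj_def l1norm_def norm_sq_vec g_def
    by (simp add: sum_subtractf sum.distrib sum_distrib_left sum_divide_distrib)
  moreover have "(\<Sum>i\<in>UNIV. g i) = (\<Sum>i\<in>S. g i) + (\<Sum>i\<in>- S. g i)"
    using sum.union_disjoint[of S "- S" g] by (simp add: Compl_partition)
  moreover have "(\<Sum>i\<in>S. g i) \<ge> (\<Sum>i\<in>S. - (1 + aS/\<alpha>) * \<bar>(xs - x0)$i\<bar>)"
  proof (rule sum_mono)
    fix i assume "i \<in> S"
    thus "- (1 + aS/\<alpha>) * \<bar>(xs - x0)$i\<bar> \<le> g i"
      using coord_obj_gain[OF a0 linf_on_ge[of S i x0], of "xs$i"]
      unfolding g_def aS_def by (simp add: algebra_simps)
  qed
  moreover have "(\<Sum>i\<in>- S. g i) \<ge> (\<Sum>i\<in>- S. (1 - aZ/\<alpha>) * \<bar>(xs - x0)$i\<bar> - 2 * \<bar>x0$i\<bar>)"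
  proof (rule sum_mono)
    fix i assume "i \<in> - S"
    thus "(1 - aZ/\<alpha>) * \<bar>(xs - x0)$i\<bar> - 2 * \<bar>x0$i\<bar> \<le> g i"
      using coord_obj_gain[OF a0 linf_on_ge[of "- S" i x0], of "xs$i"]
      unfolding g_def aZ_def by (simp add: algebra_simps)
  qed
  ultimately have "- (1 + aS/\<alpha>) * l1norm_on S (xs - x0)
      + ((1 - aZ/\<alpha>) * l1norm_on (- S) (xs - x0) - 2 * l1norm_on (- S) x0) \<le> 0"
    unfolding l1norm_on_def by (simp add: sum_distrib_left sum_subtractf)
  hence "\<alpha> * (- (1 + aS/\<alpha>) * l1norm_on S (xs - x0)
      + ((1 - aZ/\<alpha>) * l1norm_on (- S) (xs - x0) - 2 * l1norm_on (- S) x0)) \<le> 0"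
    using a0 by (simp add: mult_nonneg_nonpos)
  thus ?thesis using a0 unfolding aS_def[symmetric] aZ_def[symmetric]
    by (simp add: algebra_simps)
qed

lemma null_space_block_bound:
  fixes A :: "real ^ 'n ^ 'm" and h :: "real ^ 'n"
  assumes nsp: "\<And>h. A *v h = 0 \<Longrightarrow> h \<noteq> 0 \<Longrightarrow>
                 l1norm h \<ge> sqrt (real CARD('m) / \<Delta>) * norm h"
    and Delta_pos: "\<Delta> > 0" and C: "C \<ge> 0"
    and m_bound: "real CARD('m) \<ge> 4 * (1 + C)\<^sup>2 * real (card S) * \<Delta>"
    and Ah: "A *v h = 0"
  shows "2 * (1 + C) * l1norm_on S h \<le> l1norm h"
proof (cases "h = 0")
  case True thus ?thesis unfolding l1norm_on_def l1norm_def by simp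
next
  case False
  have "2 * (1 + C) * l1norm_on S h \<le> 2 * (1 + C) * sqrt (card S) * norm h"
    using l1norm_on_le_sqrt_card[of S h] C by (simp add: mult_left_mono)
  also have "2 * (1 + C) * sqrt (card S) = sqrt (4 * (1 + C)\<^sup>2 * card S * \<Delta> / \<Delta>)"
    using C Delta_pos by (simp add: real_sqrt_mult)
  also have "\<dots> \<le> sqrt (real CARD('m) / \<Delta>)"
    using m_bound Delta_pos by (intro real_sqrt_le_mono divide_right_mono) auto
  finally have "2 * (1 + C) * l1norm_on S h \<le> sqrt (real CARD('m) / \<Delta>) * norm h"
    by (simp add: mult_right_mono)
  thus ?thesis using nsp[OF Ah False] by linarith
qed

theorem mainTheorem6:
  fixes A :: "real ^ 'n ^ 'm" and \<Delta> \<alpha> :: real and x0 xs :: "real ^ 'n"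
    and k :: nat and S :: "'n set"
  assumes mn: "CARD('m) < CARD('n)"
    and Delta_pos: "\<Delta> > 0"
    and nsp: "\<And>h. A *v h = 0 \<Longrightarrow> h \<noteq> 0 \<Longrightarrow>
               l1norm h \<ge> sqrt (real CARD('m) / \<Delta>) * norm h"
    and S_card: "card S = k"
    and S_largest: "\<And>i j. i \<in> S \<Longrightarrow> j \<notin> S \<Longrightarrow> \<bar>x0 $ i\<bar> \<ge> \<bar>x0 $ j\<bar>"
    and alpha: "\<alpha> > linf_on (- S) x0"
    and m_bound: "real CARD('m) \<ge>
       4 * (1 + (\<alpha> + linf_on S x0) / (\<alpha> - linf_on (- S) x0))\<^sup>2 * real k * \<Delta>"
    and sol: "P2_solution A (A *v x0) \<alpha> xs"
  shows "l1norm (xs - x0) \<le> 4 * (2 * \<alpha> / (\<alpha> - linf_on (- S) x0)) * l1norm_on (- S) x0"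
proof -
  define D where "D = \<alpha> - linf_on (- S) x0"
  define C3 where "C3 = (\<alpha> + linf_on S x0) / D"
  define C4 where "C4 = 2 * \<alpha> / D"
  define HS HZ XZ where "HS = l1norm_on S (xs - x0)" and "HZ = l1norm_on (- S) (xs - x0)"
    and "XZ = l1norm_on (- S) x0"
  have D0: "D > 0" using alpha unfolding D_def by simp
  have a0: "\<alpha> > 0" using alpha linf_on_nonneg[of "- S" x0] by simp
  have C3: "C3 \<ge> 0" using D0 a0 linf_on_nonneg[of S x0] unfolding C3_def by simp
  have C4XZ: "C4 * XZ \<ge> 0"
    using D0 a0 l1norm_on_nonneg[of "- S" x0] unfolding C4_def XZ_def by simp
  have "D * (C3 * HS + C4 * XZ) = (\<alpha> + linf_on S x0) * HS + 2 * \<alpha> * XZ"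
    using D0 unfolding C3_def C4_def by (simp add: field_simps)
  hence "D * HZ \<le> D * (C3 * HS + C4 * XZ)"
    using P2_solution_cone[OF sol alpha] unfolding HS_def HZ_def XZ_def D_def by simp
  hence cone: "HZ \<le> C3 * HS + C4 * XZ" using D0 by simp
  have null: "A *v (xs - x0) = 0"
    using sol unfolding P2_solution_def by (simp add: matrix_vector_mult_diff_distrib)
  have m_bound': "real CARD('m) \<ge> 4 * (1 + C3)\<^sup>2 * real (card S) * \<Delta>"
    using m_bound S_card unfolding C3_def D_def by simp
  have "2 * (1 + C3) * HS \<le> HS + HZ"
    using null_space_block_bound[OF nsp Delta_pos C3 m_bound' null]
      l1norm_split[of "xs - x0" S]
    unfolding HS_def HZ_def by simp
  hence "HS + C3 * HS \<le> C4 * XZ" using cone by (simp add: algebra_simps)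
  hence "l1norm (xs - x0) \<le> 2 * C4 * XZ"
    using cone l1norm_split[of "xs - x0" S] unfolding HS_def HZ_def by simp
  thus ?thesis using C4XZ unfolding C4_def D_def XZ_def by linarith
qed

end
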